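(* Fix an arm $a$, a time $t$ with $n(\mathcal{T}_{a,t})\ge1$ and $\max\mathcal{T}_{a,t}\le t$, a point $(\hat\theta_a,\hat x_{a,0})\in\Theta\times\mathcal{X}$ and $\gamma\ge0$, and define $$\psi_{a,t}(\gamma)=\max\Big\{\big|g(\theta,h_a^t(x_0))-g(\hat\theta_a,h_a^t(\hat x_{a,0}))\big| : (\theta,x_0)\in\Theta\times\mathcal{X},\ \sum_{t'\in\mathcal{T}_{a,t}}\frac{\big(g(\theta,h_a^{t'}(x_0))-g(\hat\theta_a,h_a^{t'}(\hat x_{a,0}))\big)^2}{2\sigma\,n(\mathcal{T}_{a,t})}\le\gamma\Big\}.$$ Then $\psi_{a,t}(\gamma)\le L_g^2\sqrt{2\sigma\gamma}$.
   Context: Setting: $\Theta\subset\mathbb{R}^{d_\theta}$, $\mathcal{X}\subset\mathbb{R}^{d_x}$ compact convex. For arm $a$, states evolve by known dynamics $x_{s+1}=h_a(x_s,\pi_{a,s})$ along a fixed action sequence, $\pi_{a,s}\in\{0,1\}$; $h_a^s(x_0)$ denotes the state at time $s$ reached from $x_0$. $\mathcal{T}_{a,t}\subseteq\{1,\dots,t\}$ is the set of times up to $t$ at which arm $a$ is selected, $n(\mathcal{T}_{a,t})=|\mathcal{T}_{a,t}|$. $g:\Theta\times\mathcal{X}\to\mathbb{R}$ is $L_g$-bi-Lipschitz: $\frac{1}{L_g}\|u-v\|_2\le|g(u)-g(v)|\le L_g\|u-v\|_2$ for all $u,v\in\Theta\times\mathcal{X}$. The dynamics $h_a(\cdot,b)$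 are $L_h$-Lipschitz in the state with $L_h\le1$. $\sigma>0$ is the sub-Gaussian parameter of the reward distributions. *)

theory Defs
  imports "HOL-Analysis.Analysis"
begin

primrec traj :: "('arm \<Rightarrow> 'x \<Rightarrow> nat \<Rightarrow> 'x) \<Rightarrow> ('arm \<Rightarrow> nat \<Rightarrow> nat) \<Rightarrow> 'arm \<Rightarrow> nat \<Rightarrow> 'x \<Rightarrow> 'x" where
  "traj h act a 0 x0 = x0"
| "traj h act a (Suc s) x0 = h a (traj h act a s x0) (act a s)"

definition bi_lipschitz_on :: "real \<Rightarrow> 'a::metric_space set \<Rightarrow> ('a \<Rightarrow> real) \<Rightarrow> bool" where
  "bi_lipschitz_on L S f \<longleftrightarrow>
     (\<forall>u\<in>S. \<forall>v\<in>S. dist u v / L \<le> \<bar>f u - f v\<bar> \<and> \<bar>f u - f v\<bar> \<le> L * dist u v)"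

definition psi ::
  "'th set \<Rightarrow> 'x set \<Rightarrow> ('th \<times> 'x \<Rightarrow> real) \<Rightarrow> ('arm \<Rightarrow> 'x \<Rightarrow> nat \<Rightarrow> 'x) \<Rightarrow> ('arm \<Rightarrow> nat \<Rightarrow> nat)
   \<Rightarrow> ('arm \<Rightarrow> nat \<Rightarrow> nat set) \<Rightarrow> real \<Rightarrow> 'arm \<Rightarrow> nat \<Rightarrow> 'th \<Rightarrow> 'x \<Rightarrow> real \<Rightarrow> real" where
  "psi Theta X g h act T sg a t thh xh gamma =
     Sup {\<bar>g (th, traj h act a t x0) - g (thh, traj h act a t xh)\<bar> | th x0.
            th \<in> Theta \<and> x0 \<in> X \<and>
            (\<Sum>t'\<in>T a t. (g (th, traj h act a t' x0) - g (thh, traj h act a t' xh))\<^sup>2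
                 / (2 * sg * real (card (T a t)))) \<le> gamma}"

end

theory Submission
  imports Defs
begin

text \<open>Fix a feasible \<open>(\<theta>, x\<^sub>0)\<close>. Its mean squared reward gap over \<open>\<T>\<^sub>a\<^sub>,\<^sub>t\<close> is at most
  \<open>2\<sigma>\<gamma>\<close>, so at some observed time \<open>t' \<le> t\<close> the gap itself is at most \<open>\<surd>(2\<sigma>\<gamma>)\<close>. By the
  lower Lipschitz bound of \<open>g\<close> the two parameter-state pairs are then within \<open>L\<^sub>g \<surd>(2\<sigma>\<gamma>)\<close>
  at time \<open>t'\<close>; since the dynamics are non-expansive they stay that close at time \<open>t\<close>,
  and the upper Lipschitz bound of \<open>g\<close> turns this into a gap of at most \<open>L\<^sub>g\<^sup>2 \<surd>(2\<sigma>\<gamma>)\<close>.\<close>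

lemma traj_in_set:
  assumes "\<And>s. act a s \<in> B"
    and "\<And>b x. b \<in> B \<Longrightarrow> x \<in> X \<Longrightarrow> h a x b \<in> X"
    and "x \<in> X"
  shows "traj h act a s x \<in> X"
  using assms by (induction s) auto

lemma decseq_dist_traj:
  fixes h :: "'arm \<Rightarrow> 'x::metric_space \<Rightarrow> nat \<Rightarrow> 'x"
  assumes act: "\<And>s. act a s \<in> B"
    and maps: "\<And>b x. b \<in> B \<Longrightarrow> x \<in> X \<Longrightarrow> h a x b \<in> X"
    and lipschitz: "\<And>b. b \<in> B \<Longrightarrow> L-lipschitz_on X (\<lambda>x. h a x b)"
    and "L \<le> 1" "x \<in> X" "y \<in> X"
  shows "decseq (\<lambda>s. dist (traj h act a s x) (traj h act a s y))"
proof (rule decseq_SucI)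
  fix s
  let ?d = "dist (traj h act a s x) (traj h act a s y)"
  have "traj h act a s x \<in> X" "traj h act a s y \<in> X"
    using traj_in_set[of act a B X h] act maps assms(5,6) by auto
  then have "dist (traj h act a (Suc s) x) (traj h act a (Suc s) y) \<le> L * ?d"
    using lipschitz_onD[OF lipschitz[OF act]] by simp
  also have "\<dots> \<le> ?d"
    using mult_right_mono[OF \<open>L \<le> 1\<close> zero_le_dist] by simp
  finally show "dist (traj h act a (Suc s) x) (traj h act a (Suc s) y) \<le> ?d" .
qed

lemma dist_Pair_le_right_mono:
  assumes "dist x y \<le> dist x' y'"
  shows "dist (u, x) (v, y) \<le> dist (u, x') (v, y')"
  unfolding dist_Pair_Pair using assms by (intro real_sqrt_le_mono add_left_mono power_mono) auto

text \<open>No positivity of \<open>L\<close> is needed: for \<open>L \<le> 0\<close> the upper bound forces \<open>f\<close> to be constant.\<close>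
lemma bi_lipschitz_on_diff_le:
  assumes "bi_lipschitz_on L S f" "u \<in> S" "v \<in> S" "u' \<in> S" "v' \<in> S"
    and "dist u v \<le> dist u' v'"
  shows "\<bar>f u - f v\<bar> \<le> L\<^sup>2 * \<bar>f u' - f v'\<bar>"
proof -
  have upper: "\<bar>f u - f v\<bar> \<le> L * dist u v"
    and lower: "dist u' v' / L \<le> \<bar>f u' - f v'\<bar>"
    using assms(1-5) unfolding bi_lipschitz_on_def by blast+
  show ?thesis
  proof (cases "L > 0")
    case True
    have "\<bar>f u - f v\<bar> \<le> L * dist u' v'"
      using upper assms(6) True by (meson mult_left_mono less_imp_le order_trans)
    also have "\<dots> \<le> L * (L * \<bar>f u' - f v'\<bar>)"
      using lower True by (intro mult_left_mono) (auto simp: divide_le_eq mult.commute)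
    finally show ?thesis by (simp add: power2_eq_square mult.assoc)
  next
    case False
    then have "\<bar>f u - f v\<bar> \<le> 0"
      using upper by (meson mult_nonpos_nonneg not_less order_trans zero_le_dist)
    then show ?thesis by simp
  qed
qed

lemma exists_le_of_sum_le_card_mult:
  fixes f :: "'a \<Rightarrow> real"
  assumes "finite A" "A \<noteq> {}" "(\<Sum>x\<in>A. f x) \<le> real (card A) * c"
  obtains x where "x \<in> A" "f x \<le> c"
proof (rule ccontr)
  assume "\<not> thesis"
  then have "\<forall>x\<in>A. c < f x" using that by force
  then have "(\<Sum>x\<in>A. c) < (\<Sum>x\<in>A. f x)"
    using assms(1,2) by (intro sum_strict_mono) auto
  with assms(3) show False by simp
qed

theorem lemma1:
  fixes Theta :: "'th::euclidean_space set" and X :: "'x::euclidean_space set"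
    and g :: "'th \<times> 'x \<Rightarrow> real" and h :: "'arm \<Rightarrow> 'x \<Rightarrow> nat \<Rightarrow> 'x"
    and act :: "'arm \<Rightarrow> nat \<Rightarrow> nat" and T :: "'arm \<Rightarrow> nat \<Rightarrow> nat set"
    and Lg Lh sg gamma :: real and a :: 'arm and t :: nat
    and thh :: 'th and xh :: 'x
  assumes "compact Theta" "convex Theta" "compact X" "convex X"
    and "\<And>s. act a s \<in> {0, 1}"
    and "\<And>b x. b \<in> {0, 1} \<Longrightarrow> x \<in> X \<Longrightarrow> h a x b \<in> X"
    and "\<And>b. b \<in> {0, 1} \<Longrightarrow> Lh-lipschitz_on X (\<lambda>x. h a x b)"
    and "Lh \<le> 1"
    and "bi_lipschitz_on Lg (Theta \<times> X) g"
    and "sg > 0"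
    and "T a t \<subseteq> {1..t}"
    and "card (T a t) \<ge> 1"
    and "Max (T a t) \<le> t"
    and "thh \<in> Theta" "xh \<in> X"
    and "gamma \<ge> 0"
  shows "psi Theta X g h act T sg a t thh xh gamma \<le> Lg\<^sup>2 * sqrt (2 * sg * gamma)"
  unfolding psi_def
proof (rule cSup_least)
  let ?gap = "\<lambda>th x0 s. g (th, traj h act a s x0) - g (thh, traj h act a s xh)"
  let ?n = "real (card (T a t))"
  have T_fin: "finite (T a t)" and T_ne: "T a t \<noteq> {}"
    using assms(11,12) finite_subset by fastforce+
  show "{\<bar>?gap th x0 t\<bar> | th x0. th \<in> Theta \<and> x0 \<in> X \<and>
          (\<Sum>t'\<in>T a t. (?gap th x0 t')\<^sup>2 / (2 * sg * ?n)) \<le> gamma} \<noteq> {}"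
    using assms(14-16) by force
  fix z assume "z \<in> {\<bar>?gap th x0 t\<bar> | th x0. th \<in> Theta \<and> x0 \<in> X \<and>
          (\<Sum>t'\<in>T a t. (?gap th x0 t')\<^sup>2 / (2 * sg * ?n)) \<le> gamma}"
  then obtain th x0 where z: "z = \<bar>?gap th x0 t\<bar>" and th: "th \<in> Theta" and x0: "x0 \<in> X"
    and feasible: "(\<Sum>t'\<in>T a t. (?gap th x0 t')\<^sup>2) / (2 * sg * ?n) \<le> gamma"
    by (auto simp: sum_divide_distrib)
  then have "(\<Sum>t'\<in>T a t. (?gap th x0 t')\<^sup>2) \<le> ?n * (2 * sg * gamma)"
    using T_ne T_fin assms(10) by (simp add: divide_le_eq card_gt_0_iff mult_ac)
  then obtain t' where t': "t' \<in> T a t" "(?gap th x0 t')\<^sup>2 \<le> 2 * sg * gamma"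
    using exists_le_of_sum_le_card_mult[OF T_fin T_ne] by blast
  have "dist (traj h act a t x0) (traj h act a t xh) \<le> dist (traj h act a t' x0) (traj h act a t' xh)"
    using decseq_dist_traj[of act a "{0, 1}" X h, OF assms(5-8) x0 assms(15)] t'(1) assms(11) by (auto simp: decseq_def)
  moreover have "traj h act a s x \<in> X" if "x \<in> X" for s x
    using traj_in_set[of act a "{0, 1}" X h, OF assms(5,6) that] .
  ultimately have "z \<le> Lg\<^sup>2 * \<bar>?gap th x0 t'\<bar>"
    unfolding z using th x0 assms(14,15)
    by (intro bi_lipschitz_on_diff_le[OF assms(9)] dist_Pair_le_right_mono) auto
  also have "\<dots> \<le> Lg\<^sup>2 * sqrt (2 * sg * gamma)"
    using t'(2) by (intro mult_left_mono) (auto simp: real_le_rsqrt)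
  finally show "z \<le> Lg\<^sup>2 * sqrt (2 * sg * gamma)" .
qed

end
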